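(* Let $n\in\mathbb{N}$ be even and let $\mathbf{s}=(s_0,\ldots,s_n)\subset[0,\infty)$ be strictly positive on $(0,\infty)$. Let $K=\left\lceil\frac{n+1}{2}\right\rceil$ and let $\mathcal{M}^{\min}_\infty(\mathbf{s})$ be the set of $\mu\in\mathcal{M}_\infty(\mathbf{s})$ with $\#\mathrm{supp}\,\mu=K$. Then the map $\Phi:\mathcal{M}^{\min}_\infty(\mathbf{s})\to(t_\infty(\mathbf{s}),\infty)$, $\Phi(\mu)=\int_{(0,\infty)}\frac1t\,d\mu(t)$, is a well-defined bijection. Moreover, for $s_{-1}\in(t_\infty(\mathbf{s}),\infty)$ the atoms of $\Phi^{-1}(s_{-1})$ are the roots of $Q(t)=\det\begin{bmatrix}s_{-1}&s_0&\cdots&s_{K-2}&1\\ s_0&s_1&\cdots&s_{K-1}&t\\ \vdots&&&&\vdots\\ s_{K-1}&s_K&\cdots&s_{2K-2}&t^K\end{bmatrix}$.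
   Context: For $a<b$, $\mathbf{s}$ is strictly positive on $[a,b]$ if the functional $\sigma(x^k)=s_k$ is $\ge0$ on real polynomials of degree $\le n$ nonnegative on $[a,b]$ and $>0$ on such polynomials not identically zero; strictly positive on $(0,\infty)$ means on some $[a,b]\subset(0,\infty)$. $\mathcal{M}_{a,b}(\mathbf{s})$: positive Borel measures on $[a,b]$ with $k$-th moments $s_k$; $\mathcal{M}_\infty(\mathbf{s})$: positive Borel measures on $(0,\infty)$ supported in a compact subinterval of $(0,\infty)$ with $k$-th moments $s_k$, $k\le n$. $t_{a,b}(\mathbf{s})=\inf\{\int\frac1t\,d\mu:\mu\in\mathcal{M}_{a,b}(\mathbf{s})\}$ ($\inf\varnothing=\infty$), $t_\infty(\mathbf{s})=\inf_{0<a<b}t_{a,b}(\mathbf{s})$. *)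

theory Defs
  imports "HOL-Analysis.Analysis" "HOL-Computational_Algebra.Polynomial"
    "Jordan_Normal_Form.Determinant"
begin

definition mom_functional :: "nat \<Rightarrow> (nat \<Rightarrow> real) \<Rightarrow> real poly \<Rightarrow> real" where
  "mom_functional n s p = (\<Sum>k\<le>n. coeff p k * s k)"

definition strictly_pos_on :: "nat \<Rightarrow> (nat \<Rightarrow> real) \<Rightarrow> real \<Rightarrow> real \<Rightarrow> bool" where
  "strictly_pos_on n s a b \<longleftrightarrow> a < b \<and>
     (\<forall>p::real poly. degree p \<le> n \<and> (\<forall>x\<in>{a..b}. poly p x \<ge> 0) \<longrightarrow>
        mom_functional n s p \<ge> 0 \<and> (p \<noteq> 0 \<longrightarrow> mom_functional n s p > 0))"

definition strictly_pos_infty :: "nat \<Rightarrow> (nat \<Rightarrow> real) \<Rightarrow> bool" where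
  "strictly_pos_infty n s \<longleftrightarrow> (\<exists>a b. 0 < a \<and> strictly_pos_on n s a b)"

text \<open>M_{a,b}(s): positive Borel measures on [a,b] (represented as Borel measures on the
  real line vanishing outside [a,b]) with k-th moments s_k, k \<le> n.\<close>
definition M_ab :: "nat \<Rightarrow> (nat \<Rightarrow> real) \<Rightarrow> real \<Rightarrow> real \<Rightarrow> real measure set" where
  "M_ab n s a b = {\<mu>. sets \<mu> = sets borel \<and> emeasure \<mu> (- {a..b}) = 0 \<and>
      (\<forall>k\<le>n. integrable \<mu> (\<lambda>t. t ^ k) \<and> (\<integral>t. t ^ k \<partial>\<mu>) = s k)}"

definition M_infty :: "nat \<Rightarrow> (nat \<Rightarrow> real) \<Rightarrow> real measure set" where
  "M_infty n s = (\<Union>a\<in>{0<..}. \<Union>b\<in>{a<..}. M_ab n s a b)"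

definition t_ab :: "nat \<Rightarrow> (nat \<Rightarrow> real) \<Rightarrow> real \<Rightarrow> real \<Rightarrow> ereal" where
  "t_ab n s a b = (INF \<mu>\<in>M_ab n s a b. ereal (\<integral>t. 1 / t \<partial>\<mu>))"

definition t_infty :: "nat \<Rightarrow> (nat \<Rightarrow> real) \<Rightarrow> ereal" where
  "t_infty n s = (INF a\<in>{0<..}. INF b\<in>{a<..}. t_ab n s a b)"

definition msupp :: "real measure \<Rightarrow> real set" where
  "msupp \<mu> = {x. \<forall>e>0. emeasure \<mu> (ball x e) > 0}"

definition Q_det :: "nat \<Rightarrow> (nat \<Rightarrow> real) \<Rightarrow> real \<Rightarrow> real \<Rightarrow> real" where
  "Q_det K s sm1 t = Determinant.det (Matrix.mat (K + 1) (K + 1)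
     (\<lambda>(i, j). if j = K then t ^ i
               else if i + j = 0 then sm1 else s (i + j - 1)))"

end

(*
  For a measure \<mu> on [a, b] \<subseteq> (0, \<infinity>) with moments s, the sequence (\<integral> 1/t d\<mu>, s\<^sub>0, ..., s\<^sub>n)
  is the moment sequence of d\<mu>(t)/t, so its Hankel form is positive definite. Conversely, let
  x be such that the Hankel form of c = (x, s\<^sub>0, ..., s\<^sub>n) is positive definite and let L be the
  functional with moments c. Expanding Q along its last column shows that Q is L-orthogonal
  to all polynomials of degree < K; writing Q times the linear factors at its real roots as
  a sum of two squares shows that Q has K distinct real roots. Gauss quadrature at these
  roots, with positive weights \<lambda>\<^sub>y, is exact for L up to degree 2K - 1. Hence the measure
  with mass y \<lambda>\<^sub>y at each root y has moments s and \<integral> 1/t = x, its atoms are positive by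
  strict positivity of s, and every K-atomic measure with these data must be this one.
  Positive definiteness is monotone and open in x, so it holds exactly for x > t\<^sub>\<infinity>(s).
*)
theory Submission
  imports Defs "HOL-Computational_Algebra.Fundamental_Theorem_Algebra"
begin

lemma poly_map_of_real_add:
  "poly (map_poly complex_of_real (p + q)) z =
     poly (map_poly complex_of_real p) z + poly (map_poly complex_of_real q) z"
  by (induction p q rule: poly_induct2) (auto simp: map_poly_pCons algebra_simps)

lemma poly_map_of_real_mult:
  "poly (map_poly complex_of_real (p * q)) z =
     poly (map_poly complex_of_real p) z * poly (map_poly complex_of_real q) z"
proof (induction p)
  case (pCons a p)
  have "poly (map_poly complex_of_real (Polynomial.smult a q)) z = of_real a * poly (map_poly of_real q) z"
    by (induction q) (auto simp: map_poly_pCons algebra_simps)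
  with pCons show ?case
    by (simp add: poly_map_of_real_add map_poly_pCons algebra_simps)
qed simp

lemma poly_map_of_real_of_real:
  "poly (map_poly complex_of_real p) (of_real x) = of_real (poly p x)"
  by (induction p) (auto simp: map_poly_pCons)

lemma real_poly_eq_0_if_nonreal_root:
  fixes r :: "real poly"
  assumes "degree r < 2" "poly (map_poly complex_of_real r) z = 0" "Im z \<noteq> 0"
  shows "r = 0"
proof -
  have "r = [:coeff r 0, coeff r 1:]"
    using assms(1) by (intro poly_eqI) (auto simp: coeff_pCons split: nat.split intro!: coeff_eq_0)
  then obtain a b where r: "r = [:a, b:]"
    by blast
  then have "of_real a + of_real b * z = 0"
    using assms(2) by (simp add: map_poly_pCons mult.commute)
  then have "a = 0" "b = 0"
    using assms(3) by (auto simp: complex_eq_iff)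
  then show ?thesis
    using r by simp
qed

lemma real_poly_quadratic_factor:
  fixes f :: "real poly"
  assumes "0 < degree f" and no_root: "\<And>x. poly f x \<noteq> 0"
  obtains \<alpha> \<beta> q where "\<beta> \<noteq> 0" "f = ([:-\<alpha>, 1:]^2 + [:\<beta>:]^2) * q"
proof -
  have "\<not> constant (poly (map_poly complex_of_real f))"
    using assms(1) by (simp add: constant_degree degree_map_poly)
  then obtain z where z: "poly (map_poly complex_of_real f) z = 0"
    using fundamental_theorem_of_algebra by blast
  have "Im z \<noteq> 0"
    using z no_root[of "Re z"] poly_map_of_real_of_real[of f "Re z"] complex_is_Real_iff by force
  define D where "D = [:-Re z, 1:]^2 + [:Im z:]^2"
  have D_z: "poly (map_poly complex_of_real D) z = 0"
    by (simp add: D_def map_poly_pCons complex_eq_iff power2_eq_square algebra_simps)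
  have deg_D: "degree D = 2"
    by (simp add: D_def power2_eq_square)
  then have "D \<noteq> 0"
    by auto
  have "degree (f mod D) < 2"
    using degree_mod_less'[OF \<open>D \<noteq> 0\<close>, of f] deg_D by (cases "f mod D = 0") auto
  moreover have "poly (map_poly complex_of_real (f mod D)) z = 0"
    using z D_z poly_map_of_real_add[of "D * (f div D)" "f mod D" z]
      poly_map_of_real_mult[of D "f div D" z] by simp
  ultimately have "f mod D = 0"
    using \<open>Im z \<noteq> 0\<close> by (rule real_poly_eq_0_if_nonreal_root)
  then have "f = D * (f div D)"
    by (simp add: mod_0_imp_dvd dvd_mult_div_cancel)
  with \<open>Im z \<noteq> 0\<close> show ?thesis
    using that unfolding D_def by blast
qed

text \<open>Multiplying a real polynomial by the linear factors of its real roots of odd multiplicity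
  makes it of constant sign, and then it is a multiple of a sum of two squares.\<close>
definition roots_sos :: "real poly \<Rightarrow> real set \<Rightarrow> bool" where
  "roots_sos f Z \<longleftrightarrow> finite Z \<and> (\<forall>z\<in>Z. poly f z = 0) \<and>
     (\<exists>g h c. c \<noteq> 0 \<and> f * (\<Prod>z\<in>Z. [:-z, 1:]) = Polynomial.smult c (g^2 + h^2) \<and>
        2 * degree g \<le> degree f + card Z \<and> 2 * degree h \<le> degree f + card Z)"

lemma roots_sos_const: "c \<noteq> 0 \<Longrightarrow> roots_sos [:c:] {}"
  unfolding roots_sos_def by (intro conjI exI[of _ 1] exI[of _ 0] exI[of _ c]) simp_all

lemma roots_sos_linear_factor:
  assumes "roots_sos f Z" "f \<noteq> 0"
  shows "\<exists>Z'. roots_sos ([:-x, 1:] * f) Z'"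
proof -
  obtain g h c where Z: "finite Z" "\<forall>z\<in>Z. poly f z = 0" "c \<noteq> 0"
    "f * (\<Prod>z\<in>Z. [:-z, 1:]) = Polynomial.smult c (g^2 + h^2)"
    "2 * degree g \<le> degree f + card Z" "2 * degree h \<le> degree f + card Z"
    using assms(1) unfolding roots_sos_def by blast
  have deg: "degree ([:-x, 1:] * f) = degree f + 1"
    using assms(2) by (subst degree_mult_eq) auto
  show ?thesis
  proof (cases "x \<in> Z")
    case True
    have "[:-x, 1:] * f * (\<Prod>z\<in>Z - {x}. [:-z, 1:]) = f * (\<Prod>z\<in>Z. [:-z, 1:])"
      using prod.remove[OF Z(1) True, of "\<lambda>z. [:-z, 1:]"] by (simp only: mult_ac)
    moreover have "card Z = card (Z - {x}) + 1"
      using card.remove[OF Z(1) True] by simp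
    ultimately have "roots_sos ([:-x, 1:] * f) (Z - {x})"
      using Z deg unfolding roots_sos_def by auto
    then show ?thesis ..
  next
    case False
    have "[:-x, 1:] * f * (\<Prod>z\<in>insert x Z. [:-z, 1:]) = [:-x, 1:]^2 * (f * (\<Prod>z\<in>Z. [:-z, 1:]))"
      unfolding prod.insert[OF Z(1) False] power2_eq_square by (simp only: mult_ac)
    also have "\<dots> = Polynomial.smult c (([:-x, 1:] * g)^2 + ([:-x, 1:] * h)^2)"
      by (simp only: Z(4) mult_smult_right power_mult_distrib distrib_left)
    finally have "roots_sos ([:-x, 1:] * f) (insert x Z)"
      using Z deg False degree_mult_le[of "[:-x, 1:]" g] degree_mult_le[of "[:-x, 1:]" h]
      unfolding roots_sos_def by (intro conjI exI[of _ "[:-x, 1:] * g"] exI[of _ "[:-x, 1:] * h"] exI[of _ c]) auto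
    then show ?thesis ..
  qed
qed

lemma roots_sos_quadratic_factor:
  assumes "roots_sos f Z" "f \<noteq> 0"
  shows "roots_sos (([:-\<alpha>, 1:]^2 + [:\<beta>:]^2) * f) Z"
proof -
  let ?A = "[:-\<alpha>, 1:]" and ?B = "[:\<beta>:]"
  obtain g h c where Z: "finite Z" "\<forall>z\<in>Z. poly f z = 0" "c \<noteq> 0"
    "f * (\<Prod>z\<in>Z. [:-z, 1:]) = Polynomial.smult c (g^2 + h^2)"
    "2 * degree g \<le> degree f + card Z" "2 * degree h \<le> degree f + card Z"
    using assms(1) unfolding roots_sos_def by blast
  have "degree (?A^2 + ?B^2) = 2"
    by (simp add: power2_eq_square)
  then have deg: "degree ((?A^2 + ?B^2) * f) = degree f + 2"
    using assms(2) by (subst degree_mult_eq) auto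
  have two_squares: "(A^2 + B^2) * (g^2 + h^2) = (A * g - B * h)^2 + (A * h + B * g)^2"
    for A B :: "real poly"
    by (simp add: power2_eq_square algebra_simps)
  have "(?A^2 + ?B^2) * f * (\<Prod>z\<in>Z. [:-z, 1:]) =
      Polynomial.smult c ((?A * g - ?B * h)^2 + (?A * h + ?B * g)^2)"
    by (simp only: mult.assoc Z(4) mult_smult_right two_squares)
  moreover have "degree (?A * g - ?B * h) \<le> max (degree g + 1) (degree h)"
    using degree_diff_le_max[of "?A * g" "?B * h"] degree_mult_le[of ?A g] degree_mult_le[of ?B h]
    by simp
  moreover have "degree (?A * h + ?B * g) \<le> max (degree h + 1) (degree g)"
    using degree_add_le_max[of "?A * h" "?B * g"] degree_mult_le[of ?A h] degree_mult_le[of ?B g]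
    by simp
  ultimately show ?thesis
    using Z deg unfolding roots_sos_def
    by (intro conjI exI[of _ "?A * g - ?B * h"] exI[of _ "?A * h + ?B * g"] exI[of _ c]) auto
qed

lemma roots_sos_exists:
  fixes f :: "real poly"
  assumes "f \<noteq> 0"
  shows "\<exists>Z. roots_sos f Z"
  using assms
proof (induction "degree f" arbitrary: f rule: less_induct)
  case less
  consider "degree f = 0" | x where "poly f x = 0" | "0 < degree f" "\<And>x. poly f x \<noteq> 0"
    by blast
  then show ?case
  proof cases
    case 1
    then show ?thesis
      using less.prems roots_sos_const by (metis degree_eq_zeroE pCons_0_0)
  next
    case (2 x)
    then obtain f' where f: "f = [:-x, 1:] * f'"
      by (metis dvdE poly_eq_0_iff_dvd)
    with less.prems have "f' \<noteq> 0"
      by auto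
    then have "degree f' < degree f"
      unfolding f by (subst degree_mult_eq) auto
    then show ?thesis
      using less.hyps[of f'] \<open>f' \<noteq> 0\<close> f roots_sos_linear_factor by blast
  next
    case 3
    then obtain \<alpha> \<beta> q where f: "f = ([:-\<alpha>, 1:]^2 + [:\<beta>:]^2) * q"
      by (rule real_poly_quadratic_factor)
    with less.prems have "q \<noteq> 0"
      by auto
    then have "degree q < degree f"
      unfolding f by (subst degree_mult_eq) (auto simp: power2_eq_square)
    then show ?thesis
      using less.hyps[of q] \<open>q \<noteq> 0\<close> f roots_sos_quadratic_factor by blast
  qed
qed

lemma poly_eq_sum_upto:
  fixes p :: "real poly"
  assumes "degree p \<le> N"
  shows "poly p t = (\<Sum>k\<le>N. coeff p k * t ^ k)"
  unfolding poly_altdef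
  by (rule sum.mono_neutral_left) (use assms in \<open>auto simp: coeff_eq_0\<close>)

lemma mom_functional_0 [simp]: "mom_functional n c 0 = 0"
  by (simp add: mom_functional_def)

lemma mom_functional_add: "mom_functional n c (p + q) = mom_functional n c p + mom_functional n c q"
  by (simp add: mom_functional_def algebra_simps sum.distrib)

lemma mom_functional_smult: "mom_functional n c (Polynomial.smult a p) = a * mom_functional n c p"
  by (simp add: mom_functional_def sum_distrib_left algebra_simps)

lemma mom_functional_sum: "mom_functional n c (\<Sum>i\<in>A. f i) = (\<Sum>i\<in>A. mom_functional n c (f i))"
  by (induction A rule: infinite_finite_induct) (simp_all add: mom_functional_add)

lemma mom_functional_monom: "mom_functional n c (monom a k) = (if k \<le> n then a * c k else 0)"
proof -
  have "mom_functional n c (monom a k) = (\<Sum>j\<le>n. if j = k then a * c j else 0)"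
    unfolding mom_functional_def by (intro sum.cong) (auto simp: coeff_monom)
  then show ?thesis
    by simp
qed

definition hankel_pos_def :: "nat \<Rightarrow> (nat \<Rightarrow> real) \<Rightarrow> bool" where
  "hankel_pos_def m c \<longleftrightarrow>
     (\<forall>q. q \<noteq> 0 \<and> degree q \<le> m \<longrightarrow> 0 < mom_functional (2 * m + 1) c (q^2))"

definition hankel_mat :: "nat \<Rightarrow> (nat \<Rightarrow> real) \<Rightarrow> real mat" where
  "hankel_mat m c = Matrix.mat (Suc m) (Suc m) (\<lambda>(i, j). c (i + j))"

definition bordered_hankel_mat :: "nat \<Rightarrow> (nat \<Rightarrow> real) \<Rightarrow> (nat \<Rightarrow> real) \<Rightarrow> real mat" where
  "bordered_hankel_mat m c v =
     Matrix.mat (m + 2) (m + 2) (\<lambda>(i, j). if j = Suc m then v i else c (i + j))"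

definition orth_poly :: "nat \<Rightarrow> (nat \<Rightarrow> real) \<Rightarrow> real poly" where
  "orth_poly m c =
     (\<Sum>i\<le>Suc m. monom (cofactor (bordered_hankel_mat m c (\<lambda>_. 0)) i (Suc m)) i)"

lemma coeff_orth_poly:
  "coeff (orth_poly m c) i =
     (if i \<le> Suc m then cofactor (bordered_hankel_mat m c (\<lambda>_. 0)) i (Suc m) else 0)"
  unfolding orth_poly_def by (simp add: coeff_sum coeff_monom)

lemma degree_orth_poly_le: "degree (orth_poly m c) \<le> Suc m"
  by (rule degree_le) (simp add: coeff_orth_poly)

lemma det_bordered_hankel_mat:
  "det (bordered_hankel_mat m c v) = (\<Sum>i\<le>Suc m. v i * coeff (orth_poly m c) i)"
proof -
  have "mat_delete (bordered_hankel_mat m c v) i (Suc m) =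
      mat_delete (bordered_hankel_mat m c (\<lambda>_. 0)) i (Suc m)" for i
    unfolding mat_delete_def bordered_hankel_mat_def by (intro cong_mat) auto
  then have "cofactor (bordered_hankel_mat m c v) i (Suc m) =
      cofactor (bordered_hankel_mat m c (\<lambda>_. 0)) i (Suc m)" for i
    by (simp add: cofactor_def)
  then show ?thesis
    by (subst laplace_expansion_column[of _ "m + 2" "Suc m"])
      (auto simp: bordered_hankel_mat_def coeff_orth_poly lessThan_Suc_atMost intro!: sum.cong)
qed

lemma poly_orth_poly: "poly (orth_poly m c) t = det (bordered_hankel_mat m c (\<lambda>i. t ^ i))"
  by (simp add: det_bordered_hankel_mat poly_eq_sum_upto[OF degree_orth_poly_le] mult.commute)

lemma lead_coeff_orth_poly: "coeff (orth_poly m c) (Suc m) = det (hankel_mat m c)"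
proof -
  have "mat_delete (bordered_hankel_mat m c (\<lambda>_. 0)) (Suc m) (Suc m) = hankel_mat m c"
    unfolding mat_delete_def bordered_hankel_mat_def hankel_mat_def by (auto intro!: cong_mat)
  then show ?thesis
    by (simp add: coeff_orth_poly cofactor_def)
qed

lemma orth_poly_orthogonal_monom:
  assumes "j \<le> m"
  shows "mom_functional (2 * m + 1) c (orth_poly m c * monom 1 j) = 0"
proof -
  have "orth_poly m c * monom 1 j = (\<Sum>i\<le>Suc m. monom (coeff (orth_poly m c) i) (i + j))"
    by (subst poly_as_sum_of_monoms'[OF degree_orth_poly_le, symmetric])
      (simp only: sum_distrib_right mult_monom mult_1_right)
  then have "mom_functional (2 * m + 1) c (orth_poly m c * monom 1 j) =
      (\<Sum>i\<le>Suc m. c (i + j) * coeff (orth_poly m c) i)"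
    using assms by (simp del: sum.atMost_Suc add: mom_functional_sum mom_functional_monom mult.commute)
  also have "\<dots> = det (bordered_hankel_mat m c (\<lambda>i. c (i + j)))"
    by (simp add: det_bordered_hankel_mat)
  also have "\<dots> = 0"
    by (rule det_identical_columns[of _ "m + 2" j "Suc m"])
      (use assms in \<open>auto simp: bordered_hankel_mat_def\<close>)
  finally show ?thesis .
qed

lemma orth_poly_orthogonal:
  assumes "degree q \<le> m"
  shows "mom_functional (2 * m + 1) c (orth_poly m c * q) = 0"
proof -
  have "orth_poly m c * q = (\<Sum>j\<le>degree q. orth_poly m c * monom (coeff q j) j)"
    by (subst poly_as_sum_of_monoms[symmetric, of q]) (simp only: sum_distrib_left)
  also have "\<dots> = (\<Sum>j\<le>degree q. Polynomial.smult (coeff q j) (orth_poly m c * monom 1 j))"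
    by (intro sum.cong refl) (metis mult_smult_right smult_monom mult.right_neutral)
  finally show ?thesis
    using assms by (simp add: mom_functional_sum mom_functional_smult orth_poly_orthogonal_monom
        [unfolded Suc_eq_plus1[symmetric]])
qed

lemma mom_functional_square_eq_hankel_form:
  assumes "v \<in> carrier_vec (Suc m)"
  shows "mom_functional (2 * m + 1) c ((\<Sum>i\<le>m. monom (v $ i) i)^2) = v \<bullet> (hankel_mat m c *\<^sub>v v)"
proof -
  have "(\<Sum>i\<le>m. monom (v $ i) i)^2 = (\<Sum>i\<le>m. \<Sum>j\<le>m. monom (v $ i * v $ j) (i + j))"
    unfolding power2_eq_square sum_product by (simp add: mult_monom)
  then have "mom_functional (2 * m + 1) c ((\<Sum>i\<le>m. monom (v $ i) i)^2) =
      (\<Sum>i\<le>m. \<Sum>j\<le>m. v $ i * v $ j * c (i + j))"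
    by (simp add: mom_functional_sum mom_functional_monom)
  also have "\<dots> = (\<Sum>i\<le>m. v $ i * (hankel_mat m c *\<^sub>v v) $ i)"
  proof (intro sum.cong refl)
    fix i
    assume "i \<in> {..m}"
    then have "(hankel_mat m c *\<^sub>v v) $ i = (\<Sum>j\<le>m. c (i + j) * v $ j)"
      using assms by (auto simp: hankel_mat_def scalar_prod_def atLeast0LessThan lessThan_Suc_atMost)
    then show "(\<Sum>j\<le>m. v $ i * v $ j * c (i + j)) = v $ i * (hankel_mat m c *\<^sub>v v) $ i"
      by (simp add: sum_distrib_left mult_ac)
  qed
  also have "\<dots> = v \<bullet> (hankel_mat m c *\<^sub>v v)"
    using assms by (simp add: scalar_prod_def hankel_mat_def atLeast0LessThan lessThan_Suc_atMost)
  finally show ?thesis .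
qed

lemma det_hankel_mat_nonzero:
  assumes "hankel_pos_def m c"
  shows "det (hankel_mat m c) \<noteq> 0"
proof
  assume "det (hankel_mat m c) = 0"
  then obtain v where v: "v \<in> carrier_vec (Suc m)" "v \<noteq> 0\<^sub>v (Suc m)"
    "hankel_mat m c *\<^sub>v v = 0\<^sub>v (Suc m)"
    using det_0_iff_vec_prod_zero[of "hankel_mat m c" "Suc m"] by (auto simp: hankel_mat_def)
  define q where "q = (\<Sum>i\<le>m. monom (v $ i) i)"
  have coeff_q: "coeff q i = (if i \<le> m then v $ i else 0)" for i
    unfolding q_def by (simp add: coeff_sum coeff_monom)
  have "q \<noteq> 0"
  proof
    assume "q = 0"
    then have "v $ i = 0" if "i < Suc m" for i
      using coeff_q[of i] that by simp
    then show False
      using v(1,2) by (auto intro!: eq_vecI)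
  qed
  moreover have "degree q \<le> m"
    by (rule degree_le) (simp add: coeff_q)
  ultimately show False
    using assms v mom_functional_square_eq_hankel_form[OF v(1), of c]
    unfolding hankel_pos_def_def q_def by auto
qed

lemma degree_orth_poly:
  assumes "hankel_pos_def m c"
  shows "degree (orth_poly m c) = Suc m"
  using degree_orth_poly_le[of m c] le_degree[of "orth_poly m c" "Suc m"]
    det_hankel_mat_nonzero[OF assms] lead_coeff_orth_poly[of m c] by simp

text \<open>If \<open>card Z \<le> m\<close>, then \<open>orth_poly m c * \<Prod>(t - z)\<close> is annihilated by the functional,
  yet it is a nonzero multiple of a sum of squares on which the functional is positive.\<close>
lemma roots_sos_orth_poly_card:
  assumes pos: "hankel_pos_def m c" and Z: "roots_sos (orth_poly m c) Z"
  shows "Suc m \<le> card Z"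
proof (rule ccontr)
  let ?P = "orth_poly m c" and ?L = "mom_functional (2 * m + 1) c"
  assume "\<not> Suc m \<le> card Z"
  obtain g h a where "finite Z" "a \<noteq> 0"
    and sos: "?P * (\<Prod>z\<in>Z. [:-z, 1:]) = Polynomial.smult a (g^2 + h^2)"
    and "2 * degree g \<le> Suc m + card Z" "2 * degree h \<le> Suc m + card Z"
    using Z unfolding roots_sos_def degree_orth_poly[OF pos] by blast
  then have small: "degree g \<le> m" "degree h \<le> m" "degree (\<Prod>z\<in>Z. [:-z, 1:]) \<le> m"
    using \<open>\<not> Suc m \<le> card Z\<close> degree_prod_sum_le[OF \<open>finite Z\<close>, of "\<lambda>z. [:-z, 1:]"] by auto
  have zero: "a * (?L (g^2) + ?L (h^2)) = 0"
    using orth_poly_orthogonal[OF small(3), of c] sos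
    by (simp add: mom_functional_smult mom_functional_add)
  have "?P \<noteq> 0"
    using degree_orth_poly[OF pos] by auto
  have "g \<noteq> 0 \<or> h \<noteq> 0"
  proof (rule ccontr)
    assume "\<not> (g \<noteq> 0 \<or> h \<noteq> 0)"
    then have "?P * (\<Prod>z\<in>Z. [:-z, 1:]) = 0"
      using sos by simp
    moreover have "(\<Prod>z\<in>Z. [:-z, 1:]) \<noteq> (0 :: real poly)"
      using \<open>finite Z\<close> by (simp add: prod_zero_iff)
    ultimately show False
      using \<open>?P \<noteq> 0\<close> by simp
  qed
  moreover have "0 \<le> ?L (q^2)" if "degree q \<le> m" for q
    using pos that unfolding hankel_pos_def_def by (cases "q = 0") (auto simp: less_imp_le)
  ultimately have "0 < ?L (g^2) + ?L (h^2)"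
    using pos small unfolding hankel_pos_def_def by (meson add_pos_nonneg add_nonneg_pos)
  with zero show False
    using \<open>a \<noteq> 0\<close> by simp
qed

lemma card_orth_poly_roots:
  assumes pos: "hankel_pos_def m c"
  shows "card {t. poly (orth_poly m c) t = 0} = Suc m"
proof -
  let ?P = "orth_poly m c"
  have "?P \<noteq> 0"
    using degree_orth_poly[OF pos] by auto
  then obtain Z where Z: "roots_sos ?P Z"
    using roots_sos_exists by blast
  then have "Suc m \<le> card Z"
    using roots_sos_orth_poly_card[OF pos] by blast
  also have "card Z \<le> card {t. poly ?P t = 0}"
    using Z poly_roots_finite[OF \<open>?P \<noteq> 0\<close>] by (intro card_mono) (auto simp: roots_sos_def)
  finally show ?thesis
    using card_poly_roots_bound[OF \<open>?P \<noteq> 0\<close>] degree_orth_poly[OF pos] by simp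
qed

definition lagrange_basis :: "real set \<Rightarrow> real \<Rightarrow> real poly" where
  "lagrange_basis X y = Polynomial.smult (1 / (\<Prod>z\<in>X - {y}. y - z)) (\<Prod>z\<in>X - {y}. [:-z, 1:])"

lemma poly_lagrange_basis:
  assumes "finite X" "y \<in> X" "w \<in> X"
  shows "poly (lagrange_basis X y) w = (if w = y then 1 else 0)"
  using assms by (auto simp: lagrange_basis_def poly_prod prod_zero_iff)

lemma degree_lagrange_basis:
  assumes "finite X" "y \<in> X"
  shows "degree (lagrange_basis X y) = card X - 1"
  using assms by (simp add: lagrange_basis_def prod_zero_iff degree_prod_eq_sum_degree)

lemma sum_lagrange_basis:
  assumes "finite X" "y \<in> X"
  shows "(\<Sum>z\<in>X. h z * poly (lagrange_basis X y) z) = h y"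
proof -
  have "(\<Sum>z\<in>X. h z * poly (lagrange_basis X y) z) = (\<Sum>z\<in>X. if z = y then h z else 0)"
    using assms by (intro sum.cong) (auto simp: poly_lagrange_basis)
  then show ?thesis
    using assms by simp
qed

lemma lagrange_interpolation:
  fixes p :: "real poly"
  assumes "finite X" "degree p < card X"
  shows "p = (\<Sum>y\<in>X. Polynomial.smult (poly p y) (lagrange_basis X y))"
proof (rule poly_eqI_degree[of X])
  fix w
  assume "w \<in> X"
  have "(\<Sum>y\<in>X. poly p y * poly (lagrange_basis X y) w) = (\<Sum>y\<in>X. if y = w then poly p y else 0)"
    using assms(1) \<open>w \<in> X\<close> by (intro sum.cong) (auto simp: poly_lagrange_basis)
  then show "poly p w = poly (\<Sum>y\<in>X. Polynomial.smult (poly p y) (lagrange_basis X y)) w"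
    using assms(1) \<open>w \<in> X\<close> by (simp add: poly_sum)
next
  show "degree (\<Sum>y\<in>X. Polynomial.smult (poly p y) (lagrange_basis X y)) < card X"
  proof -
    have "degree (\<Sum>y\<in>X. Polynomial.smult (poly p y) (lagrange_basis X y)) \<le> card X - 1"
      using assms(1) by (intro degree_sum_le order.trans[OF degree_smult_le])
        (auto simp: degree_lagrange_basis)
    then show ?thesis
      using assms(2) by linarith
  qed
qed (use assms in auto)

definition gauss_nodes :: "nat \<Rightarrow> (nat \<Rightarrow> real) \<Rightarrow> real set" where
  "gauss_nodes m c = {t. poly (orth_poly m c) t = 0}"

definition gauss_weight :: "nat \<Rightarrow> (nat \<Rightarrow> real) \<Rightarrow> real \<Rightarrow> real" where
  "gauss_weight m c y = mom_functional (2 * m + 1) c (lagrange_basis (gauss_nodes m c) y)"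

lemma finite_gauss_nodes:
  assumes "hankel_pos_def m c"
  shows "finite (gauss_nodes m c)"
proof -
  have "orth_poly m c \<noteq> 0"
    using degree_orth_poly[OF assms] by auto
  then show ?thesis
    unfolding gauss_nodes_def by (rule poly_roots_finite)
qed

lemma card_gauss_nodes: "hankel_pos_def m c \<Longrightarrow> card (gauss_nodes m c) = Suc m"
  unfolding gauss_nodes_def by (rule card_orth_poly_roots)

text \<open>Divide by the orthogonal polynomial: the quotient is annihilated by orthogonality and the
  remainder is recovered by interpolation at the nodes.\<close>
lemma gauss_quadrature:
  assumes pos: "hankel_pos_def m c" and deg: "degree p \<le> 2 * m + 1"
  shows "mom_functional (2 * m + 1) c p = (\<Sum>y\<in>gauss_nodes m c. gauss_weight m c y * poly p y)"
proof -
  let ?P = "orth_poly m c" and ?X = "gauss_nodes m c" and ?L = "mom_functional (2 * m + 1) c"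
  have deg_P: "degree ?P = Suc m"
    using degree_orth_poly[OF pos] .
  then have "?P \<noteq> 0"
    by auto
  define d r where "d = p div ?P" and "r = p mod ?P"
  have p: "p = ?P * d + r"
    by (simp add: d_def r_def)
  have deg_r: "degree r < Suc m"
    using degree_mod_less'[OF \<open>?P \<noteq> 0\<close>] deg_P by (cases "r = 0") (auto simp: r_def)
  have "degree d \<le> m"
  proof (cases "d = 0")
    case False
    then have "degree (?P * d) = Suc m + degree d"
      using \<open>?P \<noteq> 0\<close> deg_P by (simp add: degree_mult_eq)
    then show ?thesis
      using deg deg_r p degree_add_eq_left[of r "?P * d"] by (simp add: add.commute)
  qed simp
  then have "?L p = ?L r"
    using p orth_poly_orthogonal by (simp add: mom_functional_add)
  also have "\<dots> = (\<Sum>y\<in>?X. poly r y * gauss_weight m c y)"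
    using lagrange_interpolation[of ?X r] finite_gauss_nodes[OF pos] card_gauss_nodes[OF pos] deg_r
    by (metis (no_types, lifting) gauss_weight_def mom_functional_smult mom_functional_sum sum.cong)
  also have "\<dots> = (\<Sum>y\<in>?X. gauss_weight m c y * poly p y)"
    using p by (intro sum.cong) (auto simp: gauss_nodes_def)
  finally show ?thesis .
qed

lemma gauss_quadrature_lagrange_square:
  assumes pos: "hankel_pos_def m c" and y: "y \<in> gauss_nodes m c"
    and deg: "degree (q * (lagrange_basis (gauss_nodes m c) y)^2) \<le> 2 * m + 1"
  shows "mom_functional (2 * m + 1) c (q * (lagrange_basis (gauss_nodes m c) y)^2) =
    gauss_weight m c y * poly q y"
proof -
  let ?X = "gauss_nodes m c"
  have "poly (lagrange_basis ?X y) z ^ 2 = poly (lagrange_basis ?X y) z" if "z \<in> ?X" for z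
    using poly_lagrange_basis[OF finite_gauss_nodes[OF pos] y that] by simp
  then show ?thesis
    using gauss_quadrature[OF pos deg]
      sum_lagrange_basis[OF finite_gauss_nodes[OF pos] y, of "\<lambda>z. gauss_weight m c z * poly q z"]
    by (simp add: mult.assoc cong: sum.cong)
qed

lemma degree_lagrange_basis_gauss_nodes:
  assumes "hankel_pos_def m c" "y \<in> gauss_nodes m c"
  shows "degree (lagrange_basis (gauss_nodes m c) y) = m"
  using degree_lagrange_basis[OF finite_gauss_nodes[OF assms(1)] assms(2)]
  by (simp add: card_gauss_nodes[OF assms(1)])

lemma gauss_weight_pos:
  assumes pos: "hankel_pos_def m c" and y: "y \<in> gauss_nodes m c"
  shows "0 < gauss_weight m c y"
proof -
  let ?l = "lagrange_basis (gauss_nodes m c) y"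
  have "degree ?l = m"
    using degree_lagrange_basis_gauss_nodes[OF pos y] .
  moreover have "?l \<noteq> 0"
    using poly_lagrange_basis[OF finite_gauss_nodes[OF pos] y y] by auto
  ultimately have "0 < mom_functional (2 * m + 1) c (1 * ?l^2)"
    using pos unfolding hankel_pos_def_def by simp
  also have "\<dots> = gauss_weight m c y"
    using gauss_quadrature_lagrange_square[OF pos y, of 1] \<open>degree ?l = m\<close>
    by (simp add: degree_power_le order.trans[OF degree_power_le])
  finally show ?thesis .
qed

lemma gauss_poly_0_bound:
  assumes pos: "hankel_pos_def m c" and deg: "degree q \<le> m"
  shows "(poly q 0)^2 \<le> mom_functional (2 * m + 1) c (q^2) *
    (\<Sum>y\<in>gauss_nodes m c. (poly (lagrange_basis (gauss_nodes m c) y) 0)^2 / gauss_weight m c y)"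
proof -
  let ?X = "gauss_nodes m c" and ?w = "gauss_weight m c"
  let ?l = "\<lambda>y. poly (lagrange_basis ?X y) 0"
  have w: "0 < ?w y" if "y \<in> ?X" for y
    using gauss_weight_pos[OF pos that] .
  have "q = (\<Sum>y\<in>?X. Polynomial.smult (poly q y) (lagrange_basis ?X y))"
    using deg by (intro lagrange_interpolation finite_gauss_nodes pos) (simp add: card_gauss_nodes[OF pos])
  then have "poly q 0 = (\<Sum>y\<in>?X. poly q y * ?l y)"
    by (metis (no_types, lifting) poly_smult poly_sum sum.cong)
  also have "\<dots> = (\<Sum>y\<in>?X. (sqrt (?w y) * poly q y) * (?l y / sqrt (?w y)))"
  proof (intro sum.cong refl)
    fix y
    assume "y \<in> ?X"
    then have "0 < sqrt (?w y)"
      using w by simp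
    then show "poly q y * ?l y = (sqrt (?w y) * poly q y) * (?l y / sqrt (?w y))"
      by (simp add: field_simps)
  qed
  finally have "(poly q 0)^2 \<le>
      (\<Sum>y\<in>?X. (sqrt (?w y) * poly q y)^2) * (\<Sum>y\<in>?X. (?l y / sqrt (?w y))^2)"
    by (metis Cauchy_Schwarz_ineq_sum)
  also have "(\<Sum>y\<in>?X. (sqrt (?w y) * poly q y)^2) = mom_functional (2 * m + 1) c (q^2)"
    using w deg gauss_quadrature[OF pos, of "q^2"] degree_power_le[of q 2]
    by (simp add: power_mult_distrib less_imp_le cong: sum.cong)
  also have "(\<Sum>y\<in>?X. (?l y / sqrt (?w y))^2) = (\<Sum>y\<in>?X. (?l y)^2 / ?w y)"
    using w by (intro sum.cong refl) (simp add: power_divide less_imp_le)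
  finally show ?thesis .
qed

text \<open>\<open>seq_cons x s\<close> is the sequence \<open>(x, s\<^sub>0, s\<^sub>1, \<dots>)\<close>: the value \<open>x\<close> plays the
  role of the moment \<open>s\<^sub>-\<^sub>1\<close> of the paper.\<close>
definition seq_cons :: "real \<Rightarrow> (nat \<Rightarrow> real) \<Rightarrow> nat \<Rightarrow> real" where
  "seq_cons x s k = (if k = 0 then x else s (k - 1))"

lemma mom_functional_seq_cons_pCons:
  "mom_functional (Suc n) (seq_cons x s) (pCons a q) = a * x + mom_functional n s q"
  unfolding mom_functional_def by (simp add: sum.atMost_Suc_shift seq_cons_def del: sum.atMost_Suc)

lemma mom_functional_seq_cons_shift:
  "mom_functional n (seq_cons y s) p = mom_functional n (seq_cons x s) p + (y - x) * coeff p 0"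
proof -
  have "mom_functional n (seq_cons y s) p - mom_functional n (seq_cons x s) p =
      (\<Sum>k\<le>n. if k = 0 then (y - x) * coeff p 0 else 0)"
    unfolding mom_functional_def sum_subtractf[symmetric]
    by (intro sum.cong) (auto simp: seq_cons_def algebra_simps)
  then show ?thesis
    by simp
qed

lemma coeff_square_0: "coeff (q^2) 0 = (poly q 0)^2"
  by (simp add: power2_eq_square coeff_mult_0 poly_0_coeff_0)

lemma hankel_pos_def_seq_cons_mono:
  assumes "hankel_pos_def m (seq_cons x s)" "x \<le> y"
  shows "hankel_pos_def m (seq_cons y s)"
  using assms unfolding hankel_pos_def_def
  by (auto simp: mom_functional_seq_cons_shift[of _ y s _ x] coeff_square_0 add_pos_nonneg)

lemma hankel_pos_def_seq_cons_open:
  assumes pos: "hankel_pos_def m (seq_cons x s)"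
  obtains e where "0 < e" "hankel_pos_def m (seq_cons (x - e) s)"
proof -
  let ?c = "seq_cons x s"
  let ?X = "gauss_nodes m ?c" and ?L = "mom_functional (2 * m + 1) ?c"
  define S where "S = (\<Sum>y\<in>?X. (poly (lagrange_basis ?X y) 0)^2 / gauss_weight m ?c y)"
  have "0 \<le> S"
    unfolding S_def using gauss_weight_pos[OF pos] by (intro sum_nonneg) (simp add: less_imp_le)
  have shifted: "hankel_pos_def m (seq_cons (x - 1 / (S + 1)) s)"
    unfolding hankel_pos_def_def
  proof (intro allI impI)
    fix q :: "real poly"
    assume q: "q \<noteq> 0 \<and> degree q \<le> m"
    then have "0 < ?L (q^2)"
      using pos unfolding hankel_pos_def_def by blast
    moreover have "(poly q 0)^2 \<le> ?L (q^2) * S"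
      unfolding S_def using gauss_poly_0_bound[OF pos] q by blast
    ultimately have "0 < ?L (q^2) - (poly q 0)^2 / (S + 1)"
      using \<open>0 \<le> S\<close> by (simp add: field_simps)
    then show "0 < mom_functional (2 * m + 1) (seq_cons (x - 1 / (S + 1)) s) (q^2)"
      by (simp add: mom_functional_seq_cons_shift[of _ "x - 1 / (S + 1)" s _ x] coeff_square_0)
  qed
  moreover have "0 < 1 / (S + 1)"
    using \<open>0 \<le> S\<close> by simp
  ultimately show thesis
    using that by blast
qed

lemma strictly_pos_on_square:
  assumes "strictly_pos_on n s a b" "q \<noteq> 0" "2 * degree q \<le> n"
  shows "0 < mom_functional n s (q^2)"
  using assms degree_power_le[of q 2] unfolding strictly_pos_on_def by auto

lemma gauss_nodes_seq_cons_pos: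
  assumes pos: "hankel_pos_def m (seq_cons x s)" and spos: "strictly_pos_on (2 * m) s a b"
    and y: "y \<in> gauss_nodes m (seq_cons x s)"
  shows "0 < y"
proof -
  let ?c = "seq_cons x s"
  let ?l = "lagrange_basis (gauss_nodes m ?c) y"
  have "degree ?l = m"
    using degree_lagrange_basis_gauss_nodes[OF pos y] .
  moreover have "?l \<noteq> 0"
    using poly_lagrange_basis[OF finite_gauss_nodes[OF pos] y y] by auto
  ultimately have "0 < mom_functional (2 * m) s (?l^2)"
    using strictly_pos_on_square[OF spos] by simp
  also have "\<dots> = mom_functional (2 * m + 1) ?c ([:0, 1:] * ?l^2)"
    by (simp add: mom_functional_seq_cons_pCons)
  also have "\<dots> = gauss_weight m ?c y * y"
    using gauss_quadrature_lagrange_square[OF pos y, of "[:0, 1:]"] \<open>degree ?l = m\<close>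
      degree_mult_le[of "[:0, 1:]" "?l^2"] degree_power_le[of ?l 2] by simp
  finally show ?thesis
    using gauss_weight_pos[OF pos y] by (simp add: zero_less_mult_iff)
qed

lemma space_eq_UNIV_if_sets_borel: "sets \<mu> = sets (borel :: real measure) \<Longrightarrow> space \<mu> = UNIV"
  using sets_eq_imp_space_eq by fastforce

lemma Compl_msupp_eq_Union_null_balls:
  fixes \<mu> :: "real measure"
  assumes sets: "sets \<mu> = sets borel"
  shows "- msupp \<mu> = \<Union>{ball z e | z e. 0 < e \<and> emeasure \<mu> (ball z e) = 0}"
    (is "_ = \<Union>?F")
proof
  show "\<Union>?F \<subseteq> - msupp \<mu>"
  proof
    fix y
    assume "y \<in> \<Union>?F"
    then obtain z e where ze: "emeasure \<mu> (ball z e) = 0" "y \<in> ball z e"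
      by auto
    then have "0 < e - dist z y"
      by simp
    have "ball y (e - dist z y) \<subseteq> ball z e"
      by (rule ball_subset_ball_iff[THEN iffD2]) (simp add: dist_commute)
    then have "emeasure \<mu> (ball y (e - dist z y)) = 0"
      using ze(1) emeasure_mono[of "ball y (e - dist z y)" "ball z e" \<mu>] by (simp add: sets)
    with \<open>0 < e - dist z y\<close> show "y \<in> - msupp \<mu>"
      unfolding msupp_def by (auto intro!: exI[of _ "e - dist z y"])
  qed
  show "- msupp \<mu> \<subseteq> \<Union>?F"
  proof
    fix y
    assume "y \<in> - msupp \<mu>"
    then obtain e where "0 < e" "emeasure \<mu> (ball y e) = 0"
      unfolding msupp_def by (auto simp: not_gr_zero)
    then show "y \<in> \<Union>?F"
      using centre_in_ball by blast
  qed
qed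

lemma msupp_null:
  fixes \<mu> :: "real measure"
  assumes sets: "sets \<mu> = sets borel"
  shows "emeasure \<mu> (- msupp \<mu>) = 0"
proof -
  let ?F = "{ball z e | z e. 0 < e \<and> emeasure \<mu> (ball z e) = 0}"
  obtain F' where "F' \<subseteq> ?F" "countable F'" "\<Union>F' = \<Union>?F"
    using Lindelof[of ?F] by blast
  moreover have "(\<Union>B\<in>F'. B) \<in> null_sets \<mu>"
    using \<open>F' \<subseteq> ?F\<close> by (intro null_sets_UN' \<open>countable F'\<close>) (auto simp: sets null_sets_def)
  ultimately show ?thesis
    using Compl_msupp_eq_Union_null_balls[OF sets] by auto
qed

lemma emeasure_singleton_pos_if_finite_msupp:
  fixes \<mu> :: "real measure"
  assumes sets: "sets \<mu> = sets borel" and fin: "finite (msupp \<mu>)" and x: "x \<in> msupp \<mu>"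
  shows "0 < emeasure \<mu> {x}"
proof -
  obtain d where d: "0 < d" "\<forall>y\<in>msupp \<mu>. y \<noteq> x \<longrightarrow> d \<le> dist x y"
    using finite_set_avoid[OF fin] by blast
  have "- msupp \<mu> \<in> sets \<mu>"
    using fin by (simp add: sets finite_imp_closed open_Compl borel_open)
  have "0 < emeasure \<mu> (ball x d)"
    using x d(1) unfolding msupp_def by auto
  also have "\<dots> \<le> emeasure \<mu> ({x} \<union> - msupp \<mu>)"
    using d(2) \<open>- msupp \<mu> \<in> sets \<mu>\<close> by (intro emeasure_mono) (auto simp: sets dist_commute)
  also have "\<dots> \<le> emeasure \<mu> {x} + emeasure \<mu> (- msupp \<mu>)"
    using \<open>- msupp \<mu> \<in> sets \<mu>\<close> by (intro emeasure_subadditive) (auto simp: sets)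
  finally show ?thesis
    using msupp_null[OF sets] by simp
qed

lemma msupp_subset_closed:
  fixes \<mu> :: "real measure"
  assumes sets: "sets \<mu> = sets borel" and "closed C" "emeasure \<mu> (- C) = 0"
  shows "msupp \<mu> \<subseteq> C"
proof
  fix y
  assume y: "y \<in> msupp \<mu>"
  show "y \<in> C"
  proof (rule ccontr)
    assume "y \<notin> C"
    then obtain e where "0 < e" "ball y e \<subseteq> - C"
      using \<open>closed C\<close> open_contains_ball[of "- C"] by (auto simp: closed_def)
    then have "emeasure \<mu> (ball y e) = 0"
      using assms emeasure_mono[of "ball y e" "- C" \<mu>] by (auto simp: sets borel_open closed_def)
    with y \<open>0 < e\<close> show False
      unfolding msupp_def by auto
  qed
qed

lemma integral_finite_support:
  fixes \<mu> :: "real measure"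
  assumes sets: "sets \<mu> = sets borel" and "finite X" and "emeasure \<mu> (- X) = 0"
    and "emeasure \<mu> UNIV \<noteq> \<infinity>" and f: "f \<in> borel_measurable borel"
  shows "integrable \<mu> f" "(\<integral>t. f t \<partial>\<mu>) = (\<Sum>x\<in>X. measure \<mu> {x} * f x)"
proof -
  have space: "space \<mu> = UNIV"
    using space_eq_UNIV_if_sets_borel[OF sets] .
  have "- X \<in> sets \<mu>"
    using \<open>finite X\<close> by (simp add: sets finite_imp_closed open_Compl borel_open)
  then have "AE t in \<mu>. t \<in> X"
    using assms(3) by (intro AE_I'[of "- X"]) auto
  then have eq: "AE t in \<mu>. f t = (\<Sum>x\<in>X. f x * indicator {x} t)"
    by eventually_elim (use \<open>finite X\<close> in \<open>simp add: indicator_def if_distrib cong: sum.cong\<close>)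
  have "emeasure \<mu> {x} < \<infinity>" for x
    using emeasure_space[of \<mu> "{x}"] assms(4) space by (simp add: less_top order_le_less_trans)
  then have int: "integrable \<mu> (\<lambda>t. f x * indicator {x} t)" for x
    by (intro integrable_mult_right integrable_real_indicator) (simp_all add: sets)
  then have int_sum: "integrable \<mu> (\<lambda>t. \<Sum>x\<in>X. f x * indicator {x} t)"
    by auto
  have f_meas: "f \<in> borel_measurable \<mu>"
    using f by (simp add: measurable_cong_sets[OF sets refl])
  show "integrable \<mu> f"
    by (rule integrable_cong_AE_imp[OF int_sum f_meas]) (use eq in \<open>auto elim: AE_mp\<close>)
  have "(\<integral>t. f t \<partial>\<mu>) = (\<integral>t. (\<Sum>x\<in>X. f x * indicator {x} t) \<partial>\<mu>)"
    using eq int_sum by (intro integral_cong_AE[OF f_meas]) auto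
  also have "\<dots> = (\<Sum>x\<in>X. measure \<mu> {x} * f x)"
    using int by (simp add: space mult.commute)
  finally show "(\<integral>t. f t \<partial>\<mu>) = (\<Sum>x\<in>X. measure \<mu> {x} * f x)" .
qed

lemma emeasure_finite_msupp:
  fixes \<mu> :: "real measure"
  assumes sets: "sets \<mu> = sets borel" and fin: "finite (msupp \<mu>)" and A: "A \<in> sets borel"
  shows "emeasure \<mu> A = (\<Sum>x\<in>A \<inter> msupp \<mu>. emeasure \<mu> {x})"
proof -
  have closed: "msupp \<mu> \<in> sets \<mu>" "- msupp \<mu> \<in> sets \<mu>"
    using fin by (simp_all add: sets finite_imp_closed open_Compl borel_open borel_closed)
  have "emeasure \<mu> (A - msupp \<mu>) \<le> emeasure \<mu> (- msupp \<mu>)"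
    using closed by (intro emeasure_mono) auto
  then have "emeasure \<mu> (A - msupp \<mu>) = 0"
    using msupp_null[OF sets] by simp
  moreover have "emeasure \<mu> A = emeasure \<mu> (A \<inter> msupp \<mu>) + emeasure \<mu> (A - msupp \<mu>)"
    using A closed by (subst plus_emeasure) (auto simp: sets Int_Diff_Un)
  moreover have "emeasure \<mu> (A \<inter> msupp \<mu>) = (\<Sum>x\<in>A \<inter> msupp \<mu>. emeasure \<mu> {x})"
    using fin by (intro emeasure_eq_sum_singleton) (auto simp: sets)
  ultimately show ?thesis
    by simp
qed

lemma measure_eqI_finite_msupp:
  fixes \<mu> \<nu> :: "real measure"
  assumes sets: "sets \<mu> = sets borel" "sets \<nu> = sets borel"
    and fin: "finite (msupp \<mu>)" and supp: "msupp \<nu> = msupp \<mu>"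
    and atoms: "\<And>x. x \<in> msupp \<mu> \<Longrightarrow> emeasure \<mu> {x} = emeasure \<nu> {x}"
  shows "\<mu> = \<nu>"
proof (rule measure_eqI)
  fix A
  assume "A \<in> sets \<mu>"
  then have A: "A \<in> sets borel"
    using sets by simp
  have "emeasure \<mu> A = (\<Sum>x\<in>A \<inter> msupp \<mu>. emeasure \<mu> {x})"
    using emeasure_finite_msupp[OF sets(1) fin A] .
  also have "\<dots> = (\<Sum>x\<in>A \<inter> msupp \<nu>. emeasure \<nu> {x})"
    using supp atoms by (intro sum.cong) auto
  also have "\<dots> = emeasure \<nu> A"
    using emeasure_finite_msupp[OF sets(2) _ A] fin supp by simp
  finally show "emeasure \<mu> A = emeasure \<nu> A" .
qed (simp add: sets)

definition atomic_measure :: "real set \<Rightarrow> (real \<Rightarrow> real) \<Rightarrow> real measure" where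
  "atomic_measure X w = distr (point_measure X (\<lambda>y. ennreal (w y))) borel (\<lambda>t. t)"

lemma sets_atomic_measure [simp]: "sets (atomic_measure X w) = sets borel"
  by (simp add: atomic_measure_def)

lemma emeasure_atomic_measure:
  assumes "finite X" "A \<in> sets borel"
  shows "emeasure (atomic_measure X w) A = (\<Sum>y\<in>A \<inter> X. ennreal (w y))"
proof -
  have "emeasure (atomic_measure X w) A = emeasure (point_measure X (\<lambda>y. ennreal (w y))) (A \<inter> X)"
    unfolding atomic_measure_def using assms(2)
    by (subst emeasure_distr) (auto simp: measurable_point_measure_eq1 space_point_measure)
  also have "\<dots> = (\<Sum>y\<in>A \<inter> X. ennreal (w y))"
    using assms(1) by (subst emeasure_point_measure_finite) auto
  finally show ?thesis .
qed

lemma msupp_atomic_measure: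
  assumes fin: "finite X" and pos: "\<And>y. y \<in> X \<Longrightarrow> 0 < w y"
  shows "msupp (atomic_measure X w) = X"
proof
  show "msupp (atomic_measure X w) \<subseteq> X"
    using fin emeasure_atomic_measure[OF fin, of "- X" w]
    by (intro msupp_subset_closed) (auto simp: finite_imp_closed open_Compl borel_open)
  show "X \<subseteq> msupp (atomic_measure X w)"
  proof
    fix y
    assume "y \<in> X"
    have "0 < emeasure (atomic_measure X w) (ball y e)" if "0 < e" for e
    proof -
      have "ennreal (w y) \<le> (\<Sum>z\<in>ball y e \<inter> X. ennreal (w z))"
        using \<open>y \<in> X\<close> that fin by (intro member_le_sum) auto
      then show ?thesis
        using pos[OF \<open>y \<in> X\<close>] emeasure_atomic_measure[OF fin, of "ball y e" w]
        by (simp add: borel_open order_less_le_trans[of 0 "ennreal (w y)"])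
    qed
    then show "y \<in> msupp (atomic_measure X w)"
      unfolding msupp_def by auto
  qed
qed

lemma integral_atomic_measure:
  assumes fin: "finite X" and pos: "\<And>y. y \<in> X \<Longrightarrow> 0 < w y" and f: "f \<in> borel_measurable borel"
  shows "integrable (atomic_measure X w) f"
    "(\<integral>t. f t \<partial>atomic_measure X w) = (\<Sum>y\<in>X. w y * f y)"
proof -
  have "emeasure (atomic_measure X w) (- X) = 0"
    using fin emeasure_atomic_measure[OF fin, of "- X" w]
    by (simp add: finite_imp_closed open_Compl borel_open)
  moreover have "emeasure (atomic_measure X w) UNIV \<noteq> \<infinity>"
    using emeasure_atomic_measure[OF fin, of UNIV w] fin by (simp add: ennreal_sum_eq_top)
  moreover have "measure (atomic_measure X w) {y} = w y" if "y \<in> X" for y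
    using emeasure_atomic_measure[OF fin, of "{y}" w] that pos[OF that] by (simp add: measure_def)
  ultimately show "integrable (atomic_measure X w) f"
    "(\<integral>t. f t \<partial>atomic_measure X w) = (\<Sum>y\<in>X. w y * f y)"
    using integral_finite_support[OF sets_atomic_measure fin _ _ f] by simp_all
qed

lemma borel_measurable_poly [measurable]: "poly (p :: real poly) \<in> borel_measurable borel"
  by (intro borel_measurable_continuous_onI) (auto intro: continuous_intros)

locale moment_measure =
  fixes n :: nat and s :: "nat \<Rightarrow> real" and a b :: real and \<mu> :: "real measure"
  assumes in_M_ab: "\<mu> \<in> M_ab n s a b" and a_pos: "0 < a" and a_less_b: "a < b"
begin

lemma sets_eq: "sets \<mu> = sets borel"
  using in_M_ab by (simp add: M_ab_def)

lemma space_eq: "space \<mu> = UNIV"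
  using space_eq_UNIV_if_sets_borel[OF sets_eq] .

lemma moments: "k \<le> n \<Longrightarrow> integrable \<mu> (\<lambda>t. t ^ k) \<and> (\<integral>t. t ^ k \<partial>\<mu>) = s k"
  using in_M_ab by (simp add: M_ab_def)

lemma measurable_if_borel: "f \<in> borel_measurable borel \<Longrightarrow> f \<in> borel_measurable \<mu>"
  by (simp add: measurable_cong_sets[OF sets_eq refl])

lemma finite_measure: "finite_measure \<mu>"
proof -
  have "integrable \<mu> (\<lambda>t. 1 :: real)"
    using moments[of 0] by simp
  then show ?thesis
    by (intro finite_measureI) (auto simp: space_eq integrable_iff_bounded)
qed

lemma AE_in_interval: "AE t in \<mu>. t \<in> {a..b}"
  using in_M_ab by (intro AE_I'[of "- {a..b}"]) (auto simp: M_ab_def sets_eq null_sets_def)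

lemma msupp_subset: "msupp \<mu> \<subseteq> {a..b}"
  using in_M_ab by (intro msupp_subset_closed[OF sets_eq]) (auto simp: M_ab_def)

lemma integral_poly:
  assumes "degree p \<le> n"
  shows "integrable \<mu> (poly p)" "(\<integral>t. poly p t \<partial>\<mu>) = mom_functional n s p"
proof -
  have p: "poly p = (\<lambda>t. \<Sum>k\<le>n. coeff p k * t ^ k)"
    using poly_eq_sum_upto[OF assms] by auto
  have "integrable \<mu> (\<lambda>t. coeff p k * t ^ k)" if "k \<le> n" for k
    using moments[OF that] by simp
  then show "integrable \<mu> (poly p)" "(\<integral>t. poly p t \<partial>\<mu>) = mom_functional n s p"
    unfolding p mom_functional_def by (auto simp: moments)
qed

lemma integrable_inverse: "integrable \<mu> (\<lambda>t. 1 / t)"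
proof (rule finite_measure.integrable_const_bound[OF finite_measure, of _ "1 / a"])
  show "AE t in \<mu>. norm (1 / t) \<le> 1 / a"
    using AE_in_interval by eventually_elim (use a_pos in \<open>auto simp: field_simps\<close>)
qed (simp add: measurable_if_borel)

lemma integral_poly_divide:
  assumes "degree p \<le> Suc n"
  shows "integrable \<mu> (\<lambda>t. poly p t / t)"
    "(\<integral>t. poly p t / t \<partial>\<mu>) = mom_functional (Suc n) (seq_cons (\<integral>t. 1 / t \<partial>\<mu>) s) p"
proof -
  obtain c q where p: "p = pCons c q"
    by (cases p)
  then have "degree q \<le> n"
    using assms by (cases "q = 0") auto
  have eq: "AE t in \<mu>. poly p t / t = c * (1 / t) + poly q t"
    using AE_in_interval by eventually_elim (use a_pos in \<open>auto simp: p field_simps\<close>)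
  have int: "integrable \<mu> (\<lambda>t. c * (1 / t) + poly q t)"
    using integrable_inverse integral_poly(1)[OF \<open>degree q \<le> n\<close>]
    by (intro Bochner_Integration.integrable_add integrable_mult_right) auto
  have meas: "(\<lambda>t. poly p t / t) \<in> borel_measurable \<mu>"
    by (rule measurable_if_borel) measurable
  show "integrable \<mu> (\<lambda>t. poly p t / t)"
    by (rule integrable_cong_AE_imp[OF int meas]) (use eq in \<open>auto elim: AE_mp\<close>)
  have "(\<integral>t. poly p t / t \<partial>\<mu>) = (\<integral>t. c * (1 / t) + poly q t \<partial>\<mu>)"
    using eq int meas by (intro integral_cong_AE) auto
  also have "\<dots> = (\<integral>t. c * (1 / t) \<partial>\<mu>) + (\<integral>t. poly q t \<partial>\<mu>)"
    using integrable_inverse integral_poly(1)[OF \<open>degree q \<le> n\<close>]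
    by (intro Bochner_Integration.integral_add integrable_mult_right) auto
  also have "\<dots> = mom_functional (Suc n) (seq_cons (\<integral>t. 1 / t \<partial>\<mu>) s) p"
    using integral_poly(2)[OF \<open>degree q \<le> n\<close>]
    by (simp add: p mom_functional_seq_cons_pCons del: times_divide_eq_right)
  finally show "(\<integral>t. poly p t / t \<partial>\<mu>) = mom_functional (Suc n) (seq_cons (\<integral>t. 1 / t \<partial>\<mu>) s) p" .
qed

lemma hankel_pos_def_inverse_moment:
  assumes n: "n = 2 * m" and spos: "strictly_pos_on n s a' b'"
  shows "hankel_pos_def m (seq_cons (\<integral>t. 1 / t \<partial>\<mu>) s)"
  unfolding hankel_pos_def_def
proof (intro allI impI)
  fix q :: "real poly"
  assume q: "q \<noteq> 0 \<and> degree q \<le> m"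
  then have deg: "degree (q^2) \<le> n"
    using degree_power_le[of q 2] n by simp
  have "0 < mom_functional n s (q^2)"
    using strictly_pos_on_square[OF spos] q n by auto
  also have "\<dots> = (\<integral>t. poly (q^2) t \<partial>\<mu>)"
    using integral_poly(2)[OF deg] by simp
  also have "\<dots> \<le> (\<integral>t. b * (poly (q^2) t / t) \<partial>\<mu>)"
  proof (rule integral_mono_AE)
    show "AE t in \<mu>. poly (q^2) t \<le> b * (poly (q^2) t / t)"
      using AE_in_interval
    proof eventually_elim
      case (elim t)
      then have "0 < t" "t \<le> b"
        using a_pos by auto
      then show ?case
        by (simp add: field_simps mult_right_mono)
    qed
  qed (use integral_poly(1)[OF deg] integral_poly_divide(1)[of "q^2"] deg in
      \<open>auto simp del: poly_power times_divide_eq_right intro: integrable_mult_right\<close>)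
  also have "\<dots> = b * mom_functional (Suc n) (seq_cons (\<integral>t. 1 / t \<partial>\<mu>) s) (q^2)"
    using integral_poly_divide(2)[of "q^2"] deg by (simp del: poly_power times_divide_eq_right)
  finally show "0 < mom_functional (2 * m + 1) (seq_cons (\<integral>t. 1 / t \<partial>\<mu>) s) (q^2)"
    using a_pos a_less_b n by (simp add: zero_less_mult_iff)
qed

lemma mom_functional_finite_msupp:
  assumes fin: "finite (msupp \<mu>)" and deg: "degree p \<le> Suc n"
  shows "mom_functional (Suc n) (seq_cons (\<integral>t. 1 / t \<partial>\<mu>) s) p =
    (\<Sum>z\<in>msupp \<mu>. measure \<mu> {z} / z * poly p z)"
proof -
  have "emeasure \<mu> UNIV \<noteq> \<infinity>"
    using finite_measure.emeasure_finite[OF finite_measure, of UNIV] by simp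
  then have "(\<integral>t. poly p t / t \<partial>\<mu>) = (\<Sum>z\<in>msupp \<mu>. measure \<mu> {z} * (poly p z / z))"
    using integral_finite_support(2)[OF sets_eq fin msupp_null[OF sets_eq]] by simp
  then show ?thesis
    using integral_poly_divide(2)[OF deg] by simp
qed

lemma atoms_pos:
  assumes "finite (msupp \<mu>)" "y \<in> msupp \<mu>"
  shows "0 < measure \<mu> {y}" "0 < y"
  using emeasure_singleton_pos_if_finite_msupp[OF sets_eq assms]
    finite_measure.emeasure_eq_measure[OF finite_measure] msupp_subset a_pos assms(2)
  by force+

context
  fixes m a' b' :: "_"
  assumes n: "n = 2 * m" and spos: "strictly_pos_on n s a' b'"
    and fin: "finite (msupp \<mu>)" and card: "card (msupp \<mu>) = Suc m"
begin

private abbreviation "c \<equiv> seq_cons (\<integral>t. 1 / t \<partial>\<mu>) s"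

lemma mom_functional_lagrange_basis_msupp:
  assumes y: "y \<in> msupp \<mu>" and deg: "degree q \<le> Suc m"
  shows "mom_functional (2 * m + 1) c (q * lagrange_basis (msupp \<mu>) y) = measure \<mu> {y} / y * poly q y"
proof -
  have "degree (lagrange_basis (msupp \<mu>) y) = m"
    using degree_lagrange_basis[OF fin y] card by simp
  then have "degree (q * lagrange_basis (msupp \<mu>) y) \<le> Suc n"
    using degree_mult_le[of q "lagrange_basis (msupp \<mu>) y"] deg n by simp
  then show ?thesis
    using mom_functional_finite_msupp[OF fin] sum_lagrange_basis[OF fin y,
        of "\<lambda>z. measure \<mu> {z} / z * poly q z"] n
    by (simp add: mult.assoc)
qed

lemma msupp_eq_gauss_nodes: "msupp \<mu> = gauss_nodes m c"
proof -
  have pos: "hankel_pos_def m c"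
    using hankel_pos_def_inverse_moment[OF n spos] .
  have "msupp \<mu> \<subseteq> gauss_nodes m c"
  proof
    fix y
    assume y: "y \<in> msupp \<mu>"
    have "0 = mom_functional (2 * m + 1) c (orth_poly m c * lagrange_basis (msupp \<mu>) y)"
      using orth_poly_orthogonal[of "lagrange_basis (msupp \<mu>) y" m c]
        degree_lagrange_basis[OF fin y] card by simp
    also have "\<dots> = measure \<mu> {y} / y * poly (orth_poly m c) y"
      using mom_functional_lagrange_basis_msupp[OF y] degree_orth_poly[OF pos] by simp
    finally show "y \<in> gauss_nodes m c"
      using atoms_pos[OF fin y] by (simp add: gauss_nodes_def)
  qed
  then show ?thesis
    using card_subset_eq[OF finite_gauss_nodes[OF pos]] card card_gauss_nodes[OF pos] by simp
qed

lemma measure_atom_eq_gauss_weight: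
  assumes y: "y \<in> msupp \<mu>"
  shows "measure \<mu> {y} = gauss_weight m c y * y"
proof -
  have "gauss_weight m c y = measure \<mu> {y} / y"
    using mom_functional_lagrange_basis_msupp[OF y, of 1]
    by (simp add: gauss_weight_def msupp_eq_gauss_nodes[symmetric])
  then show ?thesis
    using atoms_pos[OF fin y] by simp
qed

end

end

lemma moment_measure_if_M_infty:
  assumes "\<mu> \<in> M_infty n s"
  obtains a b where "moment_measure n s a b \<mu>"
  using assms unfolding M_infty_def moment_measure_def by auto

lemma finite_subset_interval_pos:
  fixes X :: "real set"
  assumes "finite X" "\<And>x. x \<in> X \<Longrightarrow> 0 < x"
  obtains a b where "0 < a" "a < b" "X \<subseteq> {a..b}"
proof
  let ?Y = "insert 1 X"
  have "finite ?Y" "0 < Min ?Y"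
    using assms by auto
  then have "Min ?Y \<le> y" "y \<le> Max ?Y" if "y \<in> ?Y" for y
    using that by simp_all
  then show "0 < Min ?Y / 2" "Min ?Y / 2 < Max ?Y + 1" "X \<subseteq> {Min ?Y / 2..Max ?Y + 1}"
    using \<open>0 < Min ?Y\<close> by (force simp del: Min_le_iff Max_ge_iff)+
qed

definition gauss_measure :: "nat \<Rightarrow> real \<Rightarrow> (nat \<Rightarrow> real) \<Rightarrow> real measure" where
  "gauss_measure m x s = atomic_measure (gauss_nodes m (seq_cons x s))
     (\<lambda>y. gauss_weight m (seq_cons x s) y * y)"

context
  fixes m :: nat and x :: real and s :: "nat \<Rightarrow> real" and a b :: real
  assumes pos: "hankel_pos_def m (seq_cons x s)" and spos: "strictly_pos_on (2 * m) s a b"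
begin

private lemma gauss_atoms_pos:
  assumes "y \<in> gauss_nodes m (seq_cons x s)"
  shows "0 < gauss_weight m (seq_cons x s) y * y"
  using gauss_weight_pos[OF pos assms] gauss_nodes_seq_cons_pos[OF pos spos assms] by simp

lemma msupp_gauss_measure: "msupp (gauss_measure m x s) = gauss_nodes m (seq_cons x s)"
  unfolding gauss_measure_def using finite_gauss_nodes[OF pos] gauss_atoms_pos
  by (rule msupp_atomic_measure)

lemma integral_gauss_measure:
  assumes "f \<in> borel_measurable borel"
  shows "integrable (gauss_measure m x s) f"
    "(\<integral>t. f t \<partial>gauss_measure m x s) =
       (\<Sum>y\<in>gauss_nodes m (seq_cons x s). gauss_weight m (seq_cons x s) y * (y * f y))"
  unfolding gauss_measure_def
  using integral_atomic_measure[OF finite_gauss_nodes[OF pos] gauss_atoms_pos assms]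
  by (simp_all add: mult.assoc)

lemma inverse_moment_gauss_measure: "(\<integral>t. 1 / t \<partial>gauss_measure m x s) = x"
proof -
  have "(\<integral>t. 1 / t \<partial>gauss_measure m x s) =
      (\<Sum>y\<in>gauss_nodes m (seq_cons x s). gauss_weight m (seq_cons x s) y * (y * (1 / y)))"
    by (rule integral_gauss_measure(2)) measurable
  also have "\<dots> =
      (\<Sum>y\<in>gauss_nodes m (seq_cons x s). gauss_weight m (seq_cons x s) y * poly (pCons 1 0) y)"
    using gauss_nodes_seq_cons_pos[OF pos spos] by (intro sum.cong) auto
  also have "\<dots> = mom_functional (Suc (2 * m)) (seq_cons x s) (pCons 1 0)"
    using gauss_quadrature[OF pos, of "pCons 1 0"] by simp
  also have "\<dots> = x"
    by (simp only: mom_functional_seq_cons_pCons) simp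
  finally show ?thesis .
qed

lemma integral_power_gauss_measure:
  assumes "k \<le> 2 * m"
  shows "(\<integral>t. t ^ k \<partial>gauss_measure m x s) = s k"
proof -
  let ?X = "gauss_nodes m (seq_cons x s)" and ?w = "gauss_weight m (seq_cons x s)"
  have "(\<integral>t. t ^ k \<partial>gauss_measure m x s) = (\<Sum>y\<in>?X. ?w y * (y * y ^ k))"
    by (rule integral_gauss_measure(2)) measurable
  also have "\<dots> = (\<Sum>y\<in>?X. ?w y * poly (monom 1 (Suc k)) y)"
    by (simp add: poly_monom)
  also have "\<dots> = mom_functional (2 * m + 1) (seq_cons x s) (monom 1 (Suc k))"
    using gauss_quadrature[OF pos, of "monom 1 (Suc k)"] assms by (simp add: degree_monom_eq)
  also have "\<dots> = s k"
    using assms by (simp add: mom_functional_monom seq_cons_def)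
  finally show ?thesis .
qed

lemma gauss_measure_in_M_infty: "gauss_measure m x s \<in> M_infty (2 * m) s"
proof -
  let ?X = "gauss_nodes m (seq_cons x s)" and ?\<mu> = "gauss_measure m x s"
  have fin: "finite ?X"
    using finite_gauss_nodes[OF pos] .
  obtain a' b' where "0 < a'" "a' < b'" "?X \<subseteq> {a'..b'}"
    using finite_subset_interval_pos[OF fin] gauss_nodes_seq_cons_pos[OF pos spos] by blast
  have "?\<mu> \<in> M_ab (2 * m) s a' b'"
    unfolding M_ab_def
  proof (intro CollectI conjI allI impI)
    show "sets ?\<mu> = sets borel"
      by (simp add: gauss_measure_def)
    have "- {a'..b'} \<inter> ?X = {}"
      using \<open>?X \<subseteq> {a'..b'}\<close> by blast
    moreover have "- {a'..b'} \<in> sets borel"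
      by (simp add: borel_open open_Compl)
    ultimately show "emeasure ?\<mu> (- {a'..b'}) = 0"
      unfolding gauss_measure_def by (simp only: emeasure_atomic_measure[OF fin] sum.empty)
    fix k
    assume "k \<le> 2 * m"
    show "integrable ?\<mu> (\<lambda>t. t ^ k)"
      by (rule integral_gauss_measure(1)) measurable
    show "(\<integral>t. t ^ k \<partial>?\<mu>) = s k"
      using integral_power_gauss_measure[OF \<open>k \<le> 2 * m\<close>] .
  qed
  with \<open>0 < a'\<close> \<open>a' < b'\<close> show ?thesis
    unfolding M_infty_def by blast
qed

end

lemma t_infty_le_inverse_moment:
  assumes "\<mu> \<in> M_infty n s"
  shows "t_infty n s \<le> ereal (\<integral>t. 1 / t \<partial>\<mu>)"
proof -
  obtain a b where ab: "0 < a" "a < b" "\<mu> \<in> M_ab n s a b"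
    using assms unfolding M_infty_def by auto
  have "t_infty n s \<le> t_ab n s a b"
    unfolding t_infty_def using ab by (intro INF_lower2[of a] INF_lower) auto
  also have "\<dots> \<le> ereal (\<integral>t. 1 / t \<partial>\<mu>)"
    unfolding t_ab_def using ab(3) by (rule INF_lower)
  finally show ?thesis .
qed

lemma t_infty_lessE:
  assumes "t_infty n s < ereal x"
  obtains \<mu> where "\<mu> \<in> M_infty n s" "(\<integral>t. 1 / t \<partial>\<mu>) < x"
proof -
  obtain a b \<mu> where "0 < a" "a < b" "\<mu> \<in> M_ab n s a b" "ereal (\<integral>t. 1 / t \<partial>\<mu>) < ereal x"
    using assms unfolding t_infty_def t_ab_def by (auto simp: INF_less_iff)
  then show thesis
    using that unfolding M_infty_def by auto
qed

lemma hankel_pos_def_inverse_moment_M_infty: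
  assumes spos: "strictly_pos_on (2 * m) s a b" and "\<mu> \<in> M_infty (2 * m) s"
  shows "hankel_pos_def m (seq_cons (\<integral>t. 1 / t \<partial>\<mu>) s)"
proof -
  obtain a' b' where "moment_measure (2 * m) s a' b' \<mu>"
    using assms(2) by (rule moment_measure_if_M_infty)
  then show ?thesis
    using spos by (rule moment_measure.hankel_pos_def_inverse_moment[OF _ refl])
qed

lemma t_infty_less_iff_hankel_pos_def:
  assumes spos: "strictly_pos_on (2 * m) s a b"
  shows "t_infty (2 * m) s < ereal x \<longleftrightarrow> hankel_pos_def m (seq_cons x s)"
proof
  assume "t_infty (2 * m) s < ereal x"
  then obtain \<mu> where "\<mu> \<in> M_infty (2 * m) s" "(\<integral>t. 1 / t \<partial>\<mu>) < x"
    by (rule t_infty_lessE)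
  then show "hankel_pos_def m (seq_cons x s)"
    using hankel_pos_def_seq_cons_mono[OF hankel_pos_def_inverse_moment_M_infty[OF spos]] by simp
next
  assume "hankel_pos_def m (seq_cons x s)"
  then obtain e where "0 < e" and pos: "hankel_pos_def m (seq_cons (x - e) s)"
    by (rule hankel_pos_def_seq_cons_open)
  have "t_infty (2 * m) s \<le> ereal (x - e)"
    using t_infty_le_inverse_moment[OF gauss_measure_in_M_infty[OF pos spos]]
    by (simp add: inverse_moment_gauss_measure[OF pos spos])
  also have "\<dots> < ereal x"
    using \<open>0 < e\<close> by simp
  finally show "t_infty (2 * m) s < ereal x" .
qed

lemma minimal_measure_eq_gauss_measure:
  assumes spos: "strictly_pos_on (2 * m) s a b" and "\<mu> \<in> M_infty (2 * m) s"
    and fin: "finite (msupp \<mu>)" and card: "card (msupp \<mu>) = Suc m"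
  shows "\<mu> = gauss_measure m (\<integral>t. 1 / t \<partial>\<mu>) s"
proof -
  obtain a' b' where \<mu>: "moment_measure (2 * m) s a' b' \<mu>"
    using assms(2) by (rule moment_measure_if_M_infty)
  let ?x = "\<integral>t. 1 / t \<partial>\<mu>"
  have pos: "hankel_pos_def m (seq_cons ?x s)"
    using hankel_pos_def_inverse_moment_M_infty[OF spos assms(2)] .
  have supp: "msupp \<mu> = gauss_nodes m (seq_cons ?x s)"
    using moment_measure.msupp_eq_gauss_nodes[OF \<mu> refl spos fin card] .
  show ?thesis
  proof (rule measure_eqI_finite_msupp)
    show "sets \<mu> = sets borel" "sets (gauss_measure m ?x s) = sets borel"
      using moment_measure.sets_eq[OF \<mu>] by (simp_all add: gauss_measure_def)
    show "msupp (gauss_measure m ?x s) = msupp \<mu>"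
      using msupp_gauss_measure[OF pos spos] supp by simp
    fix y
    assume y: "y \<in> msupp \<mu>"
    have "emeasure \<mu> {y} = ennreal (gauss_weight m (seq_cons ?x s) y * y)"
      using finite_measure.emeasure_eq_measure[OF moment_measure.finite_measure[OF \<mu>]]
        moment_measure.measure_atom_eq_gauss_weight[OF \<mu> refl spos fin card y] by simp
    also have "\<dots> = emeasure (gauss_measure m ?x s) {y}"
      using y supp finite_gauss_nodes[OF pos]
      by (simp add: gauss_measure_def emeasure_atomic_measure)
    finally show "emeasure \<mu> {y} = emeasure (gauss_measure m ?x s) {y}" .
  qed (rule fin)
qed

lemma minimal_measures_eq_gauss_measures:
  assumes spos: "strictly_pos_on (2 * m) s a b"
  shows "{\<mu> \<in> M_infty (2 * m) s. finite (msupp \<mu>) \<and> card (msupp \<mu>) = Suc m} =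
    (\<lambda>x. gauss_measure m x s) ` {x. hankel_pos_def m (seq_cons x s)}"
proof (intro equalityI subsetI)
  fix \<mu>
  assume "\<mu> \<in> {\<mu> \<in> M_infty (2 * m) s. finite (msupp \<mu>) \<and> card (msupp \<mu>) = Suc m}"
  then show "\<mu> \<in> (\<lambda>x. gauss_measure m x s) ` {x. hankel_pos_def m (seq_cons x s)}"
    using minimal_measure_eq_gauss_measure[OF spos] hankel_pos_def_inverse_moment_M_infty[OF spos]
    by (intro image_eqI[of _ _ "\<integral>t. 1 / t \<partial>\<mu>"]) auto
next
  fix \<mu>
  assume "\<mu> \<in> (\<lambda>x. gauss_measure m x s) ` {x. hankel_pos_def m (seq_cons x s)}"
  then obtain x where pos: "hankel_pos_def m (seq_cons x s)" and "\<mu> = gauss_measure m x s"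
    by blast
  then show "\<mu> \<in> {\<mu> \<in> M_infty (2 * m) s. finite (msupp \<mu>) \<and> card (msupp \<mu>) = Suc m}"
    using gauss_measure_in_M_infty[OF pos spos] msupp_gauss_measure[OF pos spos]
      finite_gauss_nodes[OF pos] card_gauss_nodes[OF pos] by simp
qed

lemma gauss_nodes_seq_cons_eq_Q_det_roots:
  "gauss_nodes m (seq_cons x s) = {t. Q_det (Suc m) s x t = 0}"
proof -
  have "Q_det (Suc m) s x t = poly (orth_poly m (seq_cons x s)) t" for t
    unfolding Q_det_def poly_orth_poly bordered_hankel_mat_def
    by (intro arg_cong[where f = det] cong_mat) (auto simp: seq_cons_def)
  then show ?thesis
    by (simp add: gauss_nodes_def)
qed

theorem corollary5p8:
  fixes n :: nat and s :: "nat \<Rightarrow> real"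
  assumes "even n"
    and "\<forall>k\<le>n. s k \<ge> 0"
    and "strictly_pos_infty n s"
  defines "K \<equiv> nat \<lceil>(real n + 1) / 2\<rceil>"
  defines "Mmin \<equiv> {\<mu>\<in>M_infty n s. finite (msupp \<mu>) \<and> card (msupp \<mu>) = K}"
  defines "\<Phi> \<equiv> (\<lambda>\<mu>::real measure. \<integral>t. 1 / t \<partial>\<mu>)"
  shows "bij_betw \<Phi> Mmin {x::real. t_infty n s < ereal x}
     \<and> (\<forall>sm1::real. t_infty n s < ereal sm1 \<longrightarrow>
          msupp (inv_into Mmin \<Phi> sm1) = {t::real. Q_det K s sm1 t = 0})"
proof -
  obtain m where n: "n = 2 * m"
    using \<open>even n\<close> by (elim evenE)
  have K: "K = Suc m"
    unfolding K_def n by (simp add: ceiling_unique[of "int m + 1"])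
  obtain a b where spos: "strictly_pos_on (2 * m) s a b"
    using assms(3) n unfolding strictly_pos_infty_def by blast
  let ?g = "\<lambda>x. gauss_measure m x s" and ?I = "{x. t_infty n s < ereal x}"
  have I: "t_infty n s < ereal x \<longleftrightarrow> hankel_pos_def m (seq_cons x s)" for x
    using t_infty_less_iff_hankel_pos_def[OF spos] n by simp
  have Mmin: "Mmin = ?g ` ?I"
    unfolding I unfolding Mmin_def K n by (rule minimal_measures_eq_gauss_measures[OF spos])
  have \<Phi>_g: "\<Phi> (?g x) = x" if "x \<in> ?I" for x
    using that inverse_moment_gauss_measure[OF _ spos] unfolding I \<Phi>_def by simp
  have bij: "bij_betw \<Phi> Mmin ?I"
    unfolding Mmin using \<Phi>_g by (intro bij_betw_byWitness[where f' = ?g]) auto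
  have "inv_into Mmin \<Phi> x = ?g x" if "x \<in> ?I" for x
    using bij \<Phi>_g that unfolding Mmin by (metis bij_betw_imp_inj_on image_eqI inv_into_f_f)
  then show ?thesis
    using bij msupp_gauss_measure[OF _ spos] unfolding K gauss_nodes_seq_cons_eq_Q_det_roots
    by (simp add: I)
qed

end
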